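(* Let $\beta\in\mathbb{N}=\{0,1,2,\dots\}$ and $\alpha\in\mathbb{D}\setminus\{0\}$. Let $\phi_\alpha(z)=\dfrac{\alpha-z}{1-\overline{\alpha}z}$ and, for each non-negative integer $n$, let $v_n:=C_{\phi_\alpha}^*z^n$, where $C_{\phi_\alpha}f=f\circ\phi_\alpha$ acts on $A^2_\beta$ and $^*$ denotes the adjoint in $A^2_\beta$. Then $\langle v_n,v_0\rangle=0$ whenever $n>2+\beta$.
   Context: $\mathbb{D}$ is the open unit disc. For $\beta>-1$, $A^2_\beta$ is the Hilbert space of analytic functions $f(z)=\sum_{n\ge0}\widehat f(n)z^n$ on $\mathbb{D}$ with inner product $\langle f,g\rangle=\sum_{n\ge0}\frac{n!\,\Gamma(2+\beta)}{\Gamma(n+2+\beta)}\widehat f(n)\overline{\widehat g(n)}$ (equivalently the $L^2$ inner product with respect to $(\beta+1)(1-|z|^2)^\beta dA(z)$). *)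

theory Defs
  imports "HOL-Complex_Analysis.Complex_Analysis"
begin

definition taylor_coeff :: "(complex \<Rightarrow> complex) \<Rightarrow> nat \<Rightarrow> complex" where
  "taylor_coeff f n = (deriv ^^ n) f 0 / of_nat (fact n)"

definition bergman_weight :: "real \<Rightarrow> nat \<Rightarrow> real" where
  "bergman_weight \<beta> n = fact n * Gamma (2 + \<beta>) / Gamma (real n + 2 + \<beta>)"

definition A2 :: "real \<Rightarrow> (complex \<Rightarrow> complex) set" where
  "A2 \<beta> = {f. f holomorphic_on ball 0 1 \<and>
     summable (\<lambda>n. bergman_weight \<beta> n * (cmod (taylor_coeff f n))\<^sup>2)}"

definition A2_inner :: "real \<Rightarrow> (complex \<Rightarrow> complex) \<Rightarrow> (complex \<Rightarrow> complex) \<Rightarrow> complex" where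
  "A2_inner \<beta> f g = (\<Sum>n. of_real (bergman_weight \<beta> n) * taylor_coeff f n * cnj (taylor_coeff g n))"

definition disc_aut :: "complex \<Rightarrow> complex \<Rightarrow> complex" where
  "disc_aut \<alpha> z = (\<alpha> - z) / (1 - cnj \<alpha> * z)"

definition comp_op :: "(complex \<Rightarrow> complex) \<Rightarrow> (complex \<Rightarrow> complex) \<Rightarrow> (complex \<Rightarrow> complex)" where
  "comp_op \<phi> f = f \<circ> \<phi>"

text \<open>Adjoint of C_phi in A^2_beta applied to g: the unique element v of A^2_beta
  (normalised to be 0 off the disc, so that it is unique as a HOL function) with
  <C_phi f, g> = <f, v> for all f in A^2_beta.\<close>
definition comp_adj :: "real \<Rightarrow> (complex \<Rightarrow> complex) \<Rightarrow> (complex \<Rightarrow> complex) \<Rightarrow> (complex \<Rightarrow> complex)" where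
  "comp_adj \<beta> \<phi> g = (THE v. v \<in> A2 \<beta> \<and> (\<forall>z. z \<notin> ball 0 1 \<longrightarrow> v z = 0) \<and>
      (\<forall>f\<in>A2 \<beta>. A2_inner \<beta> (comp_op \<phi> f) g = A2_inner \<beta> f v))"

end

theory Submission
  imports Defs
begin

text \<open>
  Write \<open>w\<^sub>m\<close> for the weights and \<open>b\<^sub>m\<^sub>n\<close> for the \<open>n\<close>-th Taylor coefficient of \<open>\<phi>\<^sup>m\<close>.
  Testing the adjoint relation on \<open>f = z\<^sup>m\<close> forces the \<open>m\<close>-th coefficient of
  \<open>v\<^sub>n = C\<^sub>\<phi>\<^sup>* z\<^sup>n\<close> to be \<open>w\<^sub>n cnj b\<^sub>m\<^sub>n / w\<^sub>m\<close>. Since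
  \<open>\<langle>f, v\<^sub>0\<rangle> = \<langle>C\<^sub>\<phi> f, 1\<rangle> = f (\<phi> 0)\<close>, we get \<open>\<langle>v\<^sub>n, v\<^sub>0\<rangle> = v\<^sub>n \<alpha>\<close>.
  The numbers \<open>1 / w\<^sub>m\<close> are the Taylor coefficients of the reproducing kernel
  \<open>K\<^sub>\<alpha> z = (1 - cnj \<alpha> z) powr -(2 + \<beta>)\<close>, so summing the series of \<open>v\<^sub>n\<close> at \<open>\<alpha>\<close> gives
  \<open>v\<^sub>n \<alpha> = w\<^sub>n cnj c\<^sub>n\<close>, where \<open>c\<^sub>n\<close> is the \<open>n\<close>-th Taylor coefficient of \<open>K\<^sub>\<alpha> \<circ> \<phi>\<^sub>\<alpha>\<close>.
  But \<open>K\<^sub>\<alpha> \<circ> \<phi>\<^sub>\<alpha> = (1 - |\<alpha>|\<^sup>2) powr -(2 + \<beta>) * (1 - cnj \<alpha> z) ^ (2 + \<beta>)\<close> is a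
  polynomial of degree \<open>2 + \<beta>\<close>.
\<close>

section \<open>The weights\<close>

definition bergman_kernel_coeff :: "real \<Rightarrow> nat \<Rightarrow> real" where
  "bergman_kernel_coeff b m = pochhammer (2 + b) m / fact m"

lemma bergman_kernel_coeff_pos: "b > -1 \<Longrightarrow> bergman_kernel_coeff b m > 0"
  unfolding bergman_kernel_coeff_def by (intro divide_pos_pos pochhammer_pos) auto

lemma bergman_weight_mult_kernel_coeff:
  assumes "b > -1"
  shows "bergman_weight b m * bergman_kernel_coeff b m = 1"
proof -
  have "2 + b \<notin> \<int>\<^sub>\<le>\<^sub>0"
    using assms nonpos_Ints_nonpos[of "2 + b"] by auto
  then have "pochhammer (2 + b) m = Gamma (real m + 2 + b) / Gamma (2 + b)"
    by (simp add: pochhammer_Gamma add_ac)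
  moreover have "Gamma (2 + b) > 0" "Gamma (real m + 2 + b) > 0"
    using assms by (simp_all add: Gamma_real_pos)
  ultimately show ?thesis
    unfolding bergman_weight_def bergman_kernel_coeff_def by (simp add: field_simps)
qed

lemma bergman_weight_pos: "b > -1 \<Longrightarrow> bergman_weight b m > 0"
  using bergman_weight_mult_kernel_coeff[of b m] bergman_kernel_coeff_pos[of b m]
  by (metis zero_less_mult_pos2 zero_less_one)

lemma gbinomial_minus_mult_power_minus:
  fixes a w :: "'a :: field_char_0"
  shows "((- a) gchoose m) * (- w) ^ m = pochhammer a m / fact m * w ^ m"
proof -
  have "(-1 :: 'a) ^ m * (-1) ^ m = 1"
    by (simp flip: power_mult_distrib)
  then show ?thesis
    unfolding gbinomial_pochhammer power_minus[of w] minus_minus by (simp add: field_simps)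
qed

lemma summable_bergman_kernel_coeff:
  assumes "\<bar>x\<bar> < 1"
  shows "summable (\<lambda>m. bergman_kernel_coeff b m * x ^ m)"
proof -
  have "(\<lambda>m. ((- (2 + b)) gchoose m) * (- x) ^ m) sums (1 + - x) powr (- (2 + b))"
    using assms by (intro gen_binomial_real) simp
  then show ?thesis
    unfolding gbinomial_minus_mult_power_minus bergman_kernel_coeff_def by (simp add: sums_iff)
qed

lemma sums_bergman_kernel_coeff:
  fixes w :: complex
  assumes "norm w < 1"
  shows "(\<lambda>m. of_real (bergman_kernel_coeff b m) * w ^ m) sums (1 - w) powr - of_real (2 + b)"
proof -
  have "(\<lambda>m. ((- of_real (2 + b)) gchoose m) * (- w) ^ m) sums (1 + - w) powr (- of_real (2 + b))"
    using assms by (intro gen_binomial_complex) simp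
  moreover have "((- of_real (2 + b)) gchoose m) * (- w) ^ m = of_real (bergman_kernel_coeff b m) * w ^ m"
    for m
    unfolding gbinomial_minus_mult_power_minus bergman_kernel_coeff_def pochhammer_of_real by simp
  ultimately show ?thesis by simp
qed

section \<open>Taylor coefficients\<close>

lemma taylor_coeff_eqI:
  assumes "r > 0" and "\<And>z. z \<in> ball 0 r \<Longrightarrow> (\<lambda>m. a m * z ^ m) sums f z"
  shows "taylor_coeff f m = a m"
proof -
  have "eventually (\<lambda>z. (\<lambda>m. fps_nth (Abs_fps a) m * z ^ m) sums f z) (nhds 0)"
    using eventually_nhds_in_open[of "ball 0 r" 0] assms by (auto elim!: eventually_mono)
  from fps_nth_fps_expansion[OF has_fps_expansionI[OF this]] show ?thesis
    by (simp add: taylor_coeff_def)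
qed

lemma taylor_coeff_cong:
  "eventually (\<lambda>z. f z = g z) (nhds 0) \<Longrightarrow> taylor_coeff f n = taylor_coeff g n"
  unfolding taylor_coeff_def by (simp add: higher_deriv_cong_ev)

lemma taylor_coeff_monomial: "taylor_coeff (\<lambda>z. z ^ k) m = (if m = k then 1 else 0)"
  using fps_nth_fps_expansion[OF has_fps_expansion_fps_X_power[of k], of m]
  by (simp add: taylor_coeff_def)

lemma taylor_coeff_poly: "taylor_coeff (poly p) n = coeff p n"
proof -
  have "eval_fps (fps_of_poly p) has_fps_expansion fps_of_poly p"
    by (intro eval_fps_has_fps_expansion) simp
  from fps_nth_fps_expansion[OF this, of n] show ?thesis
    by (simp add: taylor_coeff_def eval_fps_of_poly[abs_def])
qed

lemma sums_taylor_coeff: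
  assumes "f holomorphic_on ball 0 1" and "z \<in> ball 0 1"
  shows "(\<lambda>m. taylor_coeff f m * z ^ m) sums f z"
  using holomorphic_power_series[OF assms] by (simp add: taylor_coeff_def)

lemma summable_norm_taylor_coeff:
  assumes "f holomorphic_on ball 0 1" and "0 \<le> s" "s < 1"
  shows "summable (\<lambda>m. norm (taylor_coeff f m) * s ^ m)"
proof -
  have "of_real ((1 + s) / 2) \<in> ball (0 :: complex) 1"
    unfolding mem_ball_0 norm_of_real using assms by simp
  then have "summable (\<lambda>m. taylor_coeff f m * of_real ((1 + s) / 2) ^ m)"
    by (rule sums_summable[OF sums_taylor_coeff[OF assms(1)]])
  then have "summable (\<lambda>m. norm (taylor_coeff f m * of_real s ^ m))"
    by (rule powser_insidea) (use assms in \<open>simp only: norm_of_real, simp\<close>)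
  then show ?thesis
    using assms by (simp add: norm_mult norm_power)
qed

lemma norm_taylor_coeff_le:
  assumes "g holomorphic_on ball 0 1" and "\<And>z. norm z = 1/2 \<Longrightarrow> norm (g z) \<le> B"
  shows "norm (taylor_coeff g n) \<le> 2 ^ n * B"
proof -
  have "norm ((deriv ^^ n) g 0) \<le> fact n * B / (1/2) ^ n"
  proof (rule Cauchy_inequality)
    show "g holomorphic_on ball 0 (1/2)"
      using assms(1) by (rule holomorphic_on_subset) auto
    show "continuous_on (cball 0 (1/2)) g"
      using holomorphic_on_imp_continuous_on[OF assms(1)] by (rule continuous_on_subset) auto
  qed (use assms(2) in auto)
  then show ?thesis
    by (simp add: taylor_coeff_def norm_divide divide_le_eq power_one_over field_simps)
qed

lemma taylor_coeff_sum:
  assumes "finite I" and "\<And>i. i \<in> I \<Longrightarrow> g i holomorphic_on ball 0 1"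
  shows "taylor_coeff (\<lambda>z. \<Sum>i\<in>I. c i * g i z) n = (\<Sum>i\<in>I. c i * taylor_coeff (g i) n)"
  using assms
proof (induction I rule: finite_induct)
  case empty
  then show ?case by (simp add: taylor_coeff_def higher_deriv_const)
next
  case (insert i I)
  have gi: "g i holomorphic_on ball 0 1"
    and gI: "(\<lambda>z. \<Sum>j\<in>I. c j * g j z) holomorphic_on ball 0 1"
    using insert.prems by (auto intro!: holomorphic_intros)
  have "(deriv ^^ n) (\<lambda>z. c i * g i z + (\<Sum>j\<in>I. c j * g j z)) 0 =
      (deriv ^^ n) (\<lambda>z. c i * g i z) 0 + (deriv ^^ n) (\<lambda>z. \<Sum>j\<in>I. c j * g j z) 0"
    by (rule higher_deriv_add) (use gi gI in \<open>auto intro!: holomorphic_intros\<close>)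
  also have "(deriv ^^ n) (\<lambda>z. c i * g i z) 0 = c i * (deriv ^^ n) (g i) 0"
    by (rule higher_deriv_cmult[OF gi]) auto
  finally show ?case
    using insert by (simp add: taylor_coeff_def add_divide_distrib)
qed

section \<open>The reproducing kernel and the inner product\<close>

definition bergman_kernel :: "real \<Rightarrow> complex \<Rightarrow> complex \<Rightarrow> complex" where
  "bergman_kernel b a z = (1 - cnj a * z) powr - of_real (2 + b)"

lemma sums_bergman_kernel:
  assumes "a \<in> ball 0 1" and "z \<in> ball 0 1"
  shows "(\<lambda>m. (of_real (bergman_kernel_coeff b m) * cnj a ^ m) * z ^ m) sums bergman_kernel b a z"
proof -
  have "norm (cnj a * z) < 1"
    using norm_mult_less[of "cnj a" 1 z 1] assms by simp
  from sums_bergman_kernel_coeff[OF this, of b] show ?thesis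
    by (simp add: bergman_kernel_def power_mult_distrib mult.assoc)
qed

lemma holomorphic_bergman_kernel:
  "a \<in> ball 0 1 \<Longrightarrow> bergman_kernel b a holomorphic_on ball 0 1"
  by (rule power_series_holomorphic) (use sums_bergman_kernel in auto)

lemma taylor_coeff_bergman_kernel:
  "a \<in> ball 0 1 \<Longrightarrow> taylor_coeff (bergman_kernel b a) m = of_real (bergman_kernel_coeff b m) * cnj a ^ m"
  by (rule taylor_coeff_eqI[of 1]) (use sums_bergman_kernel in auto)

lemma A2_inner_monomial_left:
  "A2_inner b (\<lambda>z. z ^ k) g = of_real (bergman_weight b k) * cnj (taylor_coeff g k)"
proof -
  have "(\<lambda>m. of_real (bergman_weight b m) * taylor_coeff (\<lambda>z. z ^ k) m * cnj (taylor_coeff g m)) =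
      (\<lambda>m. if m = k then of_real (bergman_weight b k) * cnj (taylor_coeff g k) else 0)"
    by (auto simp: taylor_coeff_monomial)
  then show ?thesis
    unfolding A2_inner_def by (simp add: sums_unique[OF sums_single, symmetric])
qed

lemma A2_inner_monomial_right:
  "A2_inner b f (\<lambda>z. z ^ k) = of_real (bergman_weight b k) * taylor_coeff f k"
proof -
  have "(\<lambda>m. of_real (bergman_weight b m) * taylor_coeff f m * cnj (taylor_coeff (\<lambda>z. z ^ k) m)) =
      (\<lambda>m. if m = k then of_real (bergman_weight b k) * taylor_coeff f k else 0)"
    by (auto simp: taylor_coeff_monomial)
  then show ?thesis
    unfolding A2_inner_def by (simp add: sums_unique[OF sums_single, symmetric])
qed

lemma monomial_in_A2: "(\<lambda>z. z ^ k) \<in> A2 b"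
proof -
  have "(\<lambda>m. bergman_weight b m * (cmod (taylor_coeff (\<lambda>z. z ^ k) m))\<^sup>2) =
      (\<lambda>m. if m = k then bergman_weight b k else 0)"
    by (auto simp: taylor_coeff_monomial)
  then show ?thesis
    unfolding A2_def by (auto intro: holomorphic_intros simp: summable_single)
qed

lemma comp_adj_eqI:
  assumes "b > -1" and "V \<in> A2 b" and "\<And>z. z \<notin> ball 0 1 \<Longrightarrow> V z = 0"
    and "\<And>f. f \<in> A2 b \<Longrightarrow> A2_inner b (comp_op \<phi> f) g = A2_inner b f V"
  shows "comp_adj b \<phi> g = V"
  unfolding comp_adj_def
proof (rule the_equality)
  show "V \<in> A2 b \<and> (\<forall>z. z \<notin> ball 0 1 \<longrightarrow> V z = 0) \<and>
      (\<forall>f\<in>A2 b. A2_inner b (comp_op \<phi> f) g = A2_inner b f V)"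
    using assms by blast
  fix U
  assume U: "U \<in> A2 b \<and> (\<forall>z. z \<notin> ball 0 1 \<longrightarrow> U z = 0) \<and>
      (\<forall>f\<in>A2 b. A2_inner b (comp_op \<phi> f) g = A2_inner b f U)"
  have coeff: "taylor_coeff U k = taylor_coeff V k" for k
  proof -
    have "A2_inner b (\<lambda>z. z ^ k) U = A2_inner b (comp_op \<phi> (\<lambda>z. z ^ k)) g"
      using U monomial_in_A2 by simp
    also have "\<dots> = A2_inner b (\<lambda>z. z ^ k) V"
      by (rule assms(4)[OF monomial_in_A2])
    finally show ?thesis
      using bergman_weight_pos[OF assms(1), of k] by (simp add: A2_inner_monomial_left)
  qed
  have "U z = V z" for z
  proof (cases "z \<in> ball 0 1")
    case True
    have hU: "U holomorphic_on ball 0 1" and hV: "V holomorphic_on ball 0 1"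
      using U assms(2) by (auto simp: A2_def)
    have "(\<lambda>m. taylor_coeff V m * z ^ m) sums U z"
      using sums_taylor_coeff[OF hU True] by (simp add: coeff)
    then show ?thesis
      using sums_taylor_coeff[OF hV True] by (rule sums_unique2)
  next
    case False
    then show ?thesis
      using U assms(3) by simp
  qed
  then show "U = V" ..
qed

section \<open>The adjoint of a composition operator on monomials\<close>

definition adj_monomial_coeff :: "real \<Rightarrow> (complex \<Rightarrow> complex) \<Rightarrow> nat \<Rightarrow> nat \<Rightarrow> complex" where
  "adj_monomial_coeff b \<phi> n m =
     of_real (bergman_weight b n * bergman_kernel_coeff b m) * cnj (taylor_coeff (\<lambda>z. \<phi> z ^ m) n)"

definition adj_monomial :: "real \<Rightarrow> (complex \<Rightarrow> complex) \<Rightarrow> nat \<Rightarrow> complex \<Rightarrow> complex" where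
  "adj_monomial b \<phi> n z = (if z \<in> ball 0 1 then \<Sum>m. adj_monomial_coeff b \<phi> n m * z ^ m else 0)"

context
  fixes \<phi> :: "complex \<Rightarrow> complex"
  assumes holomorphic_self_map: "\<phi> holomorphic_on ball 0 1"
    and self_map: "\<phi> ` ball 0 1 \<subseteq> ball 0 1"
begin

lemma self_map_bound:
  obtains \<rho> where "0 \<le> \<rho>" "\<rho> < 1" "\<And>z. z \<in> cball 0 (1/2) \<Longrightarrow> norm (\<phi> z) \<le> \<rho>"
proof -
  have "continuous_on (cball 0 (1/2)) (\<lambda>z. norm (\<phi> z))"
    using holomorphic_on_imp_continuous_on[OF holomorphic_self_map]
    by (intro continuous_intros) (auto elim: continuous_on_subset)
  moreover have "cball (0 :: complex) (1/2) \<noteq> {}"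
    by simp
  ultimately obtain x where x: "x \<in> cball 0 (1/2)" "\<And>z. z \<in> cball 0 (1/2) \<Longrightarrow> norm (\<phi> z) \<le> norm (\<phi> x)"
    using continuous_attains_sup[OF compact_cball] by blast
  have "x \<in> ball 0 1"
    using x(1) by simp
  then have "norm (\<phi> x) < 1"
    using self_map by (metis image_subset_iff mem_ball_0)
  then show ?thesis
    using that[of "norm (\<phi> x)"] x(2) by simp
qed

lemma norm_taylor_coeff_power_le:
  assumes "\<And>z. norm z = 1/2 \<Longrightarrow> norm (\<phi> z) \<le> \<rho>"
  shows "norm (taylor_coeff (\<lambda>z. \<phi> z ^ m) n) \<le> 2 ^ n * \<rho> ^ m"
proof (rule norm_taylor_coeff_le)
  show "(\<lambda>z. \<phi> z ^ m) holomorphic_on ball 0 1"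
    using holomorphic_self_map by (intro holomorphic_intros)
  show "norm (\<phi> z ^ m) \<le> \<rho> ^ m" if "norm z = 1/2" for z
    unfolding norm_power using assms[OF that] by (intro power_mono) auto
qed

lemma uniform_limit_power_series_comp:
  assumes f: "f holomorphic_on ball 0 1"
  shows "uniform_limit (ball 0 (1/2)) (\<lambda>N z. \<Sum>m<N. taylor_coeff f m * \<phi> z ^ m) (f \<circ> \<phi>)
    sequentially"
proof -
  obtain \<rho> where \<rho>: "0 \<le> \<rho>" "\<rho> < 1" "\<And>z. z \<in> cball 0 (1/2) \<Longrightarrow> norm (\<phi> z) \<le> \<rho>"
    using self_map_bound by blast
  have "uniform_limit (ball 0 (1/2)) (\<lambda>N z. \<Sum>m<N. taylor_coeff f m * \<phi> z ^ m)
      (\<lambda>z. \<Sum>m. taylor_coeff f m * \<phi> z ^ m) sequentially"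
  proof (rule Weierstrass_m_test)
    show "norm (taylor_coeff f m * \<phi> z ^ m) \<le> norm (taylor_coeff f m) * \<rho> ^ m"
      if "z \<in> ball 0 (1/2)" for m z
      unfolding norm_mult norm_power using \<rho>(3)[of z] that
      by (intro mult_left_mono power_mono) auto
    show "summable (\<lambda>m. norm (taylor_coeff f m) * \<rho> ^ m)"
      using summable_norm_taylor_coeff[OF f \<rho>(1,2)] .
  qed
  moreover have "(\<Sum>m. taylor_coeff f m * \<phi> z ^ m) = (f \<circ> \<phi>) z" if "z \<in> ball 0 (1/2)" for z
  proof -
    have "z \<in> ball 0 1"
      using that by simp
    then have "\<phi> z \<in> ball 0 1"
      using self_map by blast
    from sums_unique[OF sums_taylor_coeff[OF f this]] show ?thesis
      by simp
  qed
  ultimately show ?thesis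
    by (subst (asm) uniform_limit_cong'[OF refl]) auto
qed

lemma taylor_coeff_comp_sums:
  assumes f: "f holomorphic_on ball 0 1"
  shows "(\<lambda>m. taylor_coeff f m * taylor_coeff (\<lambda>z. \<phi> z ^ m) n) sums taylor_coeff (f \<circ> \<phi>) n"
proof -
  define S where "S = (\<lambda>N z. \<Sum>m<N. taylor_coeff f m * \<phi> z ^ m)"
  have "\<phi> holomorphic_on ball 0 (1/2)"
    by (rule holomorphic_on_subset[OF holomorphic_self_map]) auto
  then have "\<forall>\<^sub>F N in sequentially. S N holomorphic_on ball 0 (1/2)"
    unfolding S_def by (intro always_eventually allI holomorphic_intros)
  then have "(\<lambda>N. (deriv ^^ n) (S N) 0) \<longlonglongrightarrow> (deriv ^^ n) (f \<circ> \<phi>) 0"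
    using uniform_limit_power_series_comp[OF f, folded S_def]
    by (intro higher_deriv_complex_uniform_limit) auto
  then have "(\<lambda>N. taylor_coeff (S N) n) \<longlonglongrightarrow> taylor_coeff (f \<circ> \<phi>) n"
    unfolding taylor_coeff_def by (intro tendsto_divide tendsto_const) auto
  moreover have "taylor_coeff (S N) n = (\<Sum>m<N. taylor_coeff f m * taylor_coeff (\<lambda>z. \<phi> z ^ m) n)" for N
    unfolding S_def using holomorphic_self_map
    by (intro taylor_coeff_sum[of "{..<N}" "\<lambda>m z. \<phi> z ^ m"]) (auto intro!: holomorphic_intros)
  ultimately show ?thesis
    unfolding sums_def by simp
qed

context
  fixes b :: real
  assumes weight_param: "b > -1"
begin

lemma norm_adj_monomial_coeff_le:
  assumes "\<And>z. norm z = 1/2 \<Longrightarrow> norm (\<phi> z) \<le> \<rho>"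
  shows "norm (adj_monomial_coeff b \<phi> n m) \<le>
    bergman_weight b n * 2 ^ n * (bergman_kernel_coeff b m * \<rho> ^ m)"
proof -
  have pos: "bergman_weight b n > 0" "bergman_kernel_coeff b m > 0"
    using bergman_weight_pos[OF weight_param] bergman_kernel_coeff_pos[OF weight_param] by auto
  then have "norm (adj_monomial_coeff b \<phi> n m) =
      bergman_weight b n * bergman_kernel_coeff b m * norm (taylor_coeff (\<lambda>z. \<phi> z ^ m) n)"
    by (simp add: adj_monomial_coeff_def norm_mult)
  also have "\<dots> \<le> bergman_weight b n * bergman_kernel_coeff b m * (2 ^ n * \<rho> ^ m)"
    using norm_taylor_coeff_power_le[OF assms] pos by (intro mult_left_mono) auto
  finally show ?thesis
    by (simp add: mult_ac)
qed

lemma sums_adj_monomial: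
  assumes "z \<in> ball 0 1"
  shows "(\<lambda>m. adj_monomial_coeff b \<phi> n m * z ^ m) sums adj_monomial b \<phi> n z"
proof -
  obtain \<rho> where \<rho>: "0 \<le> \<rho>" "\<rho> < 1" "\<And>z. z \<in> cball 0 (1/2) \<Longrightarrow> norm (\<phi> z) \<le> \<rho>"
    using self_map_bound by blast
  have "summable (\<lambda>m. adj_monomial_coeff b \<phi> n m * z ^ m)"
  proof (rule summable_comparison_test')
    show "summable (\<lambda>m. bergman_weight b n * 2 ^ n * (bergman_kernel_coeff b m * \<rho> ^ m))"
      using summable_bergman_kernel_coeff[of \<rho> b] \<rho> by (intro summable_mult) auto
    fix m
    have "norm (z ^ m) \<le> 1"
      using assms by (simp add: norm_power power_le_one)
    then have "norm (adj_monomial_coeff b \<phi> n m * z ^ m) \<le> norm (adj_monomial_coeff b \<phi> n m)"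
      unfolding norm_mult by (simp add: mult_left_le)
    also have "\<dots> \<le> bergman_weight b n * 2 ^ n * (bergman_kernel_coeff b m * \<rho> ^ m)"
      by (rule norm_adj_monomial_coeff_le) (use \<rho>(3) in simp)
    finally show "norm (adj_monomial_coeff b \<phi> n m * z ^ m) \<le>
        bergman_weight b n * 2 ^ n * (bergman_kernel_coeff b m * \<rho> ^ m)" .
  qed
  then show ?thesis
    using assms by (simp add: adj_monomial_def summable_sums)
qed

lemma taylor_coeff_adj_monomial: "taylor_coeff (adj_monomial b \<phi> n) m = adj_monomial_coeff b \<phi> n m"
  by (rule taylor_coeff_eqI[of 1]) (use sums_adj_monomial in auto)

lemma holomorphic_adj_monomial: "adj_monomial b \<phi> n holomorphic_on ball 0 1"
  by (rule power_series_holomorphic[where a = "adj_monomial_coeff b \<phi> n"]) (use sums_adj_monomial in simp)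

lemma adj_monomial_in_A2: "adj_monomial b \<phi> n \<in> A2 b"
proof -
  obtain \<rho> where \<rho>: "0 \<le> \<rho>" "\<rho> < 1" "\<And>z. z \<in> cball 0 (1/2) \<Longrightarrow> norm (\<phi> z) \<le> \<rho>"
    using self_map_bound by blast
  define C where "C = bergman_weight b n * 2 ^ n"
  have "summable (\<lambda>m. bergman_weight b m * (norm (adj_monomial_coeff b \<phi> n m))\<^sup>2)"
  proof (rule summable_comparison_test')
    show "summable (\<lambda>m. C\<^sup>2 * (bergman_kernel_coeff b m * (\<rho>\<^sup>2) ^ m))"
      using summable_bergman_kernel_coeff[of "\<rho>\<^sup>2" b] \<rho>
      by (intro summable_mult) (simp add: abs_square_less_1)
    fix m
    have w: "bergman_weight b m * bergman_kernel_coeff b m = 1" "bergman_weight b m > 0"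
      using bergman_weight_mult_kernel_coeff bergman_weight_pos weight_param by auto
    have "norm (adj_monomial_coeff b \<phi> n m) \<le> C * (bergman_kernel_coeff b m * \<rho> ^ m)"
      unfolding C_def by (rule norm_adj_monomial_coeff_le) (use \<rho>(3) in simp)
    then have "(norm (adj_monomial_coeff b \<phi> n m))\<^sup>2 \<le> (C * (bergman_kernel_coeff b m * \<rho> ^ m))\<^sup>2"
      by (intro power_mono) auto
    then have "bergman_weight b m * (norm (adj_monomial_coeff b \<phi> n m))\<^sup>2 \<le>
        bergman_weight b m * (C * (bergman_kernel_coeff b m * \<rho> ^ m))\<^sup>2"
      using w(2) by (intro mult_left_mono) auto
    also have "\<dots> = C\<^sup>2 * (bergman_kernel_coeff b m * (\<rho>\<^sup>2) ^ m) *
        (bergman_weight b m * bergman_kernel_coeff b m)"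
      by (simp add: power2_eq_square power_mult_distrib algebra_simps flip: power_mult)
    finally show "norm (bergman_weight b m * (norm (adj_monomial_coeff b \<phi> n m))\<^sup>2) \<le>
        C\<^sup>2 * (bergman_kernel_coeff b m * (\<rho>\<^sup>2) ^ m)"
      using w by simp
  qed
  then show ?thesis
    unfolding A2_def using holomorphic_adj_monomial taylor_coeff_adj_monomial by simp
qed

lemma A2_inner_adj_monomial:
  assumes "f \<in> A2 b"
  shows "A2_inner b (comp_op \<phi> f) (\<lambda>z. z ^ n) = A2_inner b f (adj_monomial b \<phi> n)"
proof -
  have f: "f holomorphic_on ball 0 1"
    using assms by (simp add: A2_def)
  have termwise: "of_real (bergman_weight b m) * taylor_coeff f m * cnj (taylor_coeff (adj_monomial b \<phi> n) m) =
      of_real (bergman_weight b n) * (taylor_coeff f m * taylor_coeff (\<lambda>z. \<phi> z ^ m) n)" for m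
  proof -
    have "complex_of_real (bergman_weight b m) * of_real (bergman_weight b n * bergman_kernel_coeff b m) =
        of_real (bergman_weight b n * (bergman_weight b m * bergman_kernel_coeff b m))"
      by (simp add: mult_ac)
    also have "\<dots> = of_real (bergman_weight b n)"
      by (simp add: bergman_weight_mult_kernel_coeff[OF weight_param])
    finally show ?thesis
      unfolding taylor_coeff_adj_monomial adj_monomial_coeff_def complex_cnj_mult complex_cnj_cnj
        complex_cnj_complex_of_real
      by (metis (no_types, lifting) mult.assoc mult.commute)
  qed
  have "(\<lambda>m. of_real (bergman_weight b n) * (taylor_coeff f m * taylor_coeff (\<lambda>z. \<phi> z ^ m) n))
      sums (of_real (bergman_weight b n) * taylor_coeff (f \<circ> \<phi>) n)"
    by (intro sums_mult taylor_coeff_comp_sums f)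
  then have "(\<lambda>m. of_real (bergman_weight b m) * taylor_coeff f m * cnj (taylor_coeff (adj_monomial b \<phi> n) m))
      sums (of_real (bergman_weight b n) * taylor_coeff (f \<circ> \<phi>) n)"
    by (simp only: termwise)
  then show ?thesis
    unfolding A2_inner_monomial_right comp_op_def A2_inner_def[of b f] by (simp add: sums_iff)
qed

lemma comp_adj_monomial: "comp_adj b \<phi> (\<lambda>z. z ^ n) = adj_monomial b \<phi> n"
  by (rule comp_adj_eqI[OF weight_param adj_monomial_in_A2])
    (simp_all add: adj_monomial_def A2_inner_adj_monomial)

lemma A2_inner_adj_monomial_0:
  assumes "f \<in> A2 b"
  shows "A2_inner b f (adj_monomial b \<phi> 0) = f (\<phi> 0)"
proof -
  have "A2_inner b f (adj_monomial b \<phi> 0) = A2_inner b (comp_op \<phi> f) (\<lambda>z. z ^ 0)"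
    by (rule A2_inner_adj_monomial[OF assms, symmetric])
  also have "\<dots> = of_real (bergman_weight b 0) * taylor_coeff (f \<circ> \<phi>) 0"
    by (simp only: A2_inner_monomial_right comp_op_def)
  also have "bergman_weight b 0 = 1"
    using bergman_weight_mult_kernel_coeff[OF weight_param, of 0] by (simp add: bergman_kernel_coeff_def)
  finally show ?thesis
    by (simp add: taylor_coeff_def)
qed

lemma adj_monomial_apply:
  assumes a: "a \<in> ball 0 1"
  shows "adj_monomial b \<phi> n a =
    of_real (bergman_weight b n) * cnj (taylor_coeff (bergman_kernel b a \<circ> \<phi>) n)"
proof -
  have "(\<lambda>m. of_real (bergman_weight b n) *
        (taylor_coeff (bergman_kernel b a) m * taylor_coeff (\<lambda>z. \<phi> z ^ m) n))
      sums (of_real (bergman_weight b n) * taylor_coeff (bergman_kernel b a \<circ> \<phi>) n)"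
    by (intro sums_mult taylor_coeff_comp_sums holomorphic_bergman_kernel a)
  then have "(\<lambda>m. cnj (of_real (bergman_weight b n) *
        (taylor_coeff (bergman_kernel b a) m * taylor_coeff (\<lambda>z. \<phi> z ^ m) n)))
      sums cnj (of_real (bergman_weight b n) * taylor_coeff (bergman_kernel b a \<circ> \<phi>) n)"
    by (simp only: sums_cnj)
  moreover have "cnj (of_real (bergman_weight b n) *
        (taylor_coeff (bergman_kernel b a) m * taylor_coeff (\<lambda>z. \<phi> z ^ m) n)) =
      adj_monomial_coeff b \<phi> n m * a ^ m" for m
    by (simp add: taylor_coeff_bergman_kernel[OF a] adj_monomial_coeff_def mult_ac)
  ultimately have "(\<lambda>m. adj_monomial_coeff b \<phi> n m * a ^ m)
      sums cnj (of_real (bergman_weight b n) * taylor_coeff (bergman_kernel b a \<circ> \<phi>) n)"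
    by simp
  from sums_unique2[OF sums_adj_monomial[OF a] this] show ?thesis
    by simp
qed

end

end

section \<open>The disc automorphism\<close>

lemma disc_aut_eq_Moebius_function: "disc_aut \<alpha> = (\<lambda>z. - Moebius_function 0 \<alpha> z)"
  by (simp add: fun_eq_iff disc_aut_def Moebius_function_simple minus_divide_left)

lemma holomorphic_disc_aut: "\<alpha> \<in> ball 0 1 \<Longrightarrow> disc_aut \<alpha> holomorphic_on ball 0 1"
  unfolding disc_aut_eq_Moebius_function
  by (intro holomorphic_intros Moebius_function_holomorphic) simp

lemma disc_aut_maps_disc: "\<alpha> \<in> ball 0 1 \<Longrightarrow> disc_aut \<alpha> ` ball 0 1 \<subseteq> ball 0 1"
  unfolding disc_aut_eq_Moebius_function by (auto intro!: Moebius_function_norm_lt_1)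

lemma bergman_kernel_comp_disc_aut:
  assumes "\<alpha> \<in> ball 0 1" and "z \<in> ball 0 1"
  shows "bergman_kernel (real p) \<alpha> (disc_aut \<alpha> z) =
    poly (smult (inverse ((1 - cnj \<alpha> * \<alpha>) ^ (p + 2))) ([:1, - cnj \<alpha>:] ^ (p + 2))) z"
proof -
  have nonzero: "1 - cnj \<alpha> * w \<noteq> 0" if "w \<in> ball 0 1" for w
    using norm_mult_less[of "cnj \<alpha>" 1 w 1] assms(1) that by auto
  have quotient_nonzero: "(1 - cnj \<alpha> * \<alpha>) / (1 - cnj \<alpha> * z) \<noteq> 0"
    using nonzero assms by simp
  have linear_factor: "poly [:1, - cnj \<alpha>:] z = 1 - cnj \<alpha> * z"
    by (simp add: mult.commute)
  have "1 - cnj \<alpha> * disc_aut \<alpha> z = (1 - cnj \<alpha> * \<alpha>) / (1 - cnj \<alpha> * z)"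
    using nonzero[OF assms(2)] by (simp add: disc_aut_def field_simps)
  moreover have "- of_real (2 + real p) = - (of_nat (p + 2) :: complex)"
    by simp
  ultimately have "bergman_kernel (real p) \<alpha> (disc_aut \<alpha> z) =
      ((1 - cnj \<alpha> * \<alpha>) / (1 - cnj \<alpha> * z)) powr - of_nat (p + 2)"
    by (simp only: bergman_kernel_def)
  also have "\<dots> = inverse (((1 - cnj \<alpha> * \<alpha>) / (1 - cnj \<alpha> * z)) ^ (p + 2))"
    by (simp only: powr_minus powr_complexpow[OF quotient_nonzero])
  also have "\<dots> = inverse ((1 - cnj \<alpha> * \<alpha>) ^ (p + 2)) * (1 - cnj \<alpha> * z) ^ (p + 2)"
    by (simp add: power_divide field_simps)
  also have "\<dots> = poly (smult (inverse ((1 - cnj \<alpha> * \<alpha>) ^ (p + 2))) ([:1, - cnj \<alpha>:] ^ (p + 2))) z"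
    using linear_factor by (simp only: poly_smult poly_power)
  finally show ?thesis .
qed

lemma taylor_coeff_bergman_kernel_comp_disc_aut:
  assumes "\<alpha> \<in> ball 0 1" and "n > p + 2"
  shows "taylor_coeff (bergman_kernel (real p) \<alpha> \<circ> disc_aut \<alpha>) n = 0"
proof -
  define P where "P = smult (inverse ((1 - cnj \<alpha> * \<alpha>) ^ (p + 2))) ([:1, - cnj \<alpha>:] ^ (p + 2))"
  have "(bergman_kernel (real p) \<alpha> \<circ> disc_aut \<alpha>) z = poly P z" if "z \<in> ball 0 1" for z
    unfolding P_def comp_def by (rule bergman_kernel_comp_disc_aut[OF assms(1) that])
  then have "eventually (\<lambda>z. (bergman_kernel (real p) \<alpha> \<circ> disc_aut \<alpha>) z = poly P z) (nhds 0)"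
    using eventually_nhds_in_open[of "ball 0 1" 0] by (auto elim!: eventually_mono)
  then have "taylor_coeff (bergman_kernel (real p) \<alpha> \<circ> disc_aut \<alpha>) n = coeff P n"
    unfolding taylor_coeff_poly[symmetric] by (rule taylor_coeff_cong)
  moreover have "degree P < n"
  proof -
    have "degree P \<le> degree [:1, - cnj \<alpha>:] * (p + 2)"
      unfolding P_def using degree_smult_le degree_power_le order_trans by blast
    also have "\<dots> \<le> 1 * (p + 2)"
      by (rule mult_le_mono1) (use degree_pCons_le[of 1 "[:- cnj \<alpha>:]"] in simp)
    also have "\<dots> < n"
      using assms(2) by simp
    finally show ?thesis .
  qed
  ultimately show ?thesis
    by (simp add: coeff_eq_0)
qed

theorem lemma5p1:
  fixes \<beta> n :: nat and \<alpha> :: complex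
  assumes "\<alpha> \<in> ball 0 1" and "\<alpha> \<noteq> 0" and "n > 2 + \<beta>"
  shows "A2_inner (real \<beta>) (comp_adj (real \<beta>) (disc_aut \<alpha>) (\<lambda>z. z ^ n))
                            (comp_adj (real \<beta>) (disc_aut \<alpha>) (\<lambda>z. z ^ 0)) = 0"
proof -
  note self_map = holomorphic_disc_aut[OF assms(1)] disc_aut_maps_disc[OF assms(1)]
  have weight_param: "real \<beta> > -1"
    by simp
  let ?v = "adj_monomial (real \<beta>) (disc_aut \<alpha>)"
  have "A2_inner (real \<beta>) (?v n) (?v 0) = ?v n (disc_aut \<alpha> 0)"
    by (intro A2_inner_adj_monomial_0 adj_monomial_in_A2 self_map weight_param)
  also have "\<dots> = of_real (bergman_weight (real \<beta>) n) *
      cnj (taylor_coeff (bergman_kernel (real \<beta>) \<alpha> \<circ> disc_aut \<alpha>) n)"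
    using adj_monomial_apply[OF self_map weight_param assms(1)] by (simp add: disc_aut_def)
  also have "taylor_coeff (bergman_kernel (real \<beta>) \<alpha> \<circ> disc_aut \<alpha>) n = 0"
    using assms by (intro taylor_coeff_bergman_kernel_comp_disc_aut) auto
  finally show ?thesis
    unfolding comp_adj_monomial[OF self_map weight_param] by simp
qed

end
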